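(* For every compact ordered space $X$, the convex Vietoris hyperspace $\mathbb{V}^{\mathrm{c}}X$ (with its topology and the Egli–Milner order) is a compact ordered space.
   Context: A compact ordered space is a compact Hausdorff space equipped with a partial order that is a closed subset of $X\times X$ (product topology). For a subset $Y$ of a poset, $\uparrow Y$ and $\downarrow Y$ are its up-closure and down-closure; $Y$ is convex if $y_1\le x\le y_2$ with $y_1,y_2\in Y$ implies $x\in Y$; $\updownarrow Y=\uparrow Y\cap\downarrow Y$. For a compact ordered space $X$, $\mathbb{V}^{\mathrm{c}}X$ is the set of closed convex subsets of $X$ (including $\varnothing$), with the topology generated by the sets $\Diamond U=\{K\mid K\cap U\neq\varnothing\}$ and $\Box U=\{K\mid K\subseteq U\}$ for $U$ ranging over open upsets and open downsets of $X$, and ordered by the Egli–Milner order: $K\le_{\mathrm{EM}}L$ iff $\uparrow L\subseteq\uparrow K$ and $\downarrow K\subseteq\downarrow L$. *)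

theory Defs
  imports "HOL-Analysis.Analysis"
begin

text \<open>A partial order on the carrier of a topological space is given as a relation
  le; only its restriction to topspace X matters.\<close>

definition partial_order_on_set :: "'a set \<Rightarrow> ('a \<Rightarrow> 'a \<Rightarrow> bool) \<Rightarrow> bool" where
  "partial_order_on_set S le \<longleftrightarrow>
     (\<forall>x\<in>S. le x x) \<and>
     (\<forall>x\<in>S. \<forall>y\<in>S. le x y \<and> le y x \<longrightarrow> x = y) \<and>
     (\<forall>x\<in>S. \<forall>y\<in>S. \<forall>z\<in>S. le x y \<and> le y z \<longrightarrow> le x z)"

definition order_graph :: "'a topology \<Rightarrow> ('a \<Rightarrow> 'a \<Rightarrow> bool) \<Rightarrow> ('a \<times> 'a) set" where
  "order_graph X le = {(x, y). x \<in> topspace X \<and> y \<in> topspace X \<and> le x y}"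

definition compact_ordered_space :: "'a topology \<Rightarrow> ('a \<Rightarrow> 'a \<Rightarrow> bool) \<Rightarrow> bool" where
  "compact_ordered_space X le \<longleftrightarrow>
     compact_space X \<and> Hausdorff_space X \<and> partial_order_on_set (topspace X) le \<and>
     closedin (prod_topology X X) (order_graph X le)"

definition up_closure :: "'a topology \<Rightarrow> ('a \<Rightarrow> 'a \<Rightarrow> bool) \<Rightarrow> 'a set \<Rightarrow> 'a set" where
  "up_closure X le Y = {x \<in> topspace X. \<exists>y\<in>Y. le y x}"

definition down_closure :: "'a topology \<Rightarrow> ('a \<Rightarrow> 'a \<Rightarrow> bool) \<Rightarrow> 'a set \<Rightarrow> 'a set" where
  "down_closure X le Y = {x \<in> topspace X. \<exists>y\<in>Y. le x y}"

definition is_upset :: "'a topology \<Rightarrow> ('a \<Rightarrow> 'a \<Rightarrow> bool) \<Rightarrow> 'a set \<Rightarrow> bool" where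
  "is_upset X le U \<longleftrightarrow> U \<subseteq> topspace X \<and> up_closure X le U \<subseteq> U"

definition is_downset :: "'a topology \<Rightarrow> ('a \<Rightarrow> 'a \<Rightarrow> bool) \<Rightarrow> 'a set \<Rightarrow> bool" where
  "is_downset X le U \<longleftrightarrow> U \<subseteq> topspace X \<and> down_closure X le U \<subseteq> U"

definition order_convex :: "'a topology \<Rightarrow> ('a \<Rightarrow> 'a \<Rightarrow> bool) \<Rightarrow> 'a set \<Rightarrow> bool" where
  "order_convex X le Y \<longleftrightarrow>
     (\<forall>y1\<in>Y. \<forall>y2\<in>Y. \<forall>x\<in>topspace X. le y1 x \<and> le x y2 \<longrightarrow> x \<in> Y)"

text \<open>Carrier of the convex Vietoris hyperspace: closed convex subsets (including the empty set).\<close>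

definition Vc_carrier :: "'a topology \<Rightarrow> ('a \<Rightarrow> 'a \<Rightarrow> bool) \<Rightarrow> 'a set set" where
  "Vc_carrier X le = {K. closedin X K \<and> order_convex X le K}"

definition Vc_diamond :: "'a topology \<Rightarrow> ('a \<Rightarrow> 'a \<Rightarrow> bool) \<Rightarrow> 'a set \<Rightarrow> 'a set set" where
  "Vc_diamond X le U = {K \<in> Vc_carrier X le. K \<inter> U \<noteq> {}}"

definition Vc_box :: "'a topology \<Rightarrow> ('a \<Rightarrow> 'a \<Rightarrow> bool) \<Rightarrow> 'a set \<Rightarrow> 'a set set" where
  "Vc_box X le U = {K \<in> Vc_carrier X le. K \<subseteq> U}"

definition open_up_or_down :: "'a topology \<Rightarrow> ('a \<Rightarrow> 'a \<Rightarrow> bool) \<Rightarrow> 'a set \<Rightarrow> bool" where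
  "open_up_or_down X le U \<longleftrightarrow> openin X U \<and> (is_upset X le U \<or> is_downset X le U)"

text \<open>Note Box (topspace X) is the whole carrier, so the topspace
  of the generated topology is exactly the carrier.\<close>

definition Vc_topology :: "'a topology \<Rightarrow> ('a \<Rightarrow> 'a \<Rightarrow> bool) \<Rightarrow> 'a set topology" where
  "Vc_topology X le = topology_generated_by
     ({Vc_diamond X le U | U. open_up_or_down X le U} \<union> {Vc_box X le U | U. open_up_or_down X le U})"

definition EM_le :: "'a topology \<Rightarrow> ('a \<Rightarrow> 'a \<Rightarrow> bool) \<Rightarrow> 'a set \<Rightarrow> 'a set \<Rightarrow> bool" where
  "EM_le X le K L \<longleftrightarrow> up_closure X le L \<subseteq> up_closure X le K \<and> down_closure X le K \<subseteq> down_closure X le L"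

end

theory Submission
  imports Defs
begin

text \<open>
  In a compact ordered space, closed sets have closed up- and down-closures, and two closed
  sets C, D with no point of C below a point of D are separated by a disjoint open upset and
  open downset (Nachbin).  If K is not below L in the Egli--Milner order, some point of K lies
  outside the down-closure of L or some point of L outside the up-closure of K; separating that
  point from the other set yields subbasic neighbourhoods of K and L of the forms Diamond U and
  Box V (or Box U and Diamond V) none of whose members are Egli--Milner related.  This makes
  the order closed and the hyperspace Hausdorff.  Compactness follows from Alexander's subbase
  theorem: removing from X every U with Diamond U in a subbasic cover leaves a closed convex
  set, which therefore lies in some Box V of the cover, and finitely many of the removed U
  already cover the compact set X - V.
\<close>

lemma topology_generated_by_eq_subbase:
  "topology_generated_by \<B> =
     topology (arbitrary union_of (finite intersection_of (\<lambda>S. S \<in> \<B>) relative_to \<Union>\<B>))"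
  (is "_ = topology ?open")
proof (subst topology_eq, intro allI iffI)
  fix S assume "openin (topology_generated_by \<B>) S"
  then have "generate_topology_on \<B> S"
    by (rule openin_topology_generated_by)
  then show "openin (topology ?open) S"
  proof (rule generate_topology_on_coarsest[rotated 2])
    fix B assume "B \<in> \<B>"
    then show "openin (topology ?open) B"
      unfolding openin_subbase
      by (metis Sup_upper arbitrary_union_of_inc finite_intersection_of_inc relative_to_subset_inc)
  qed (rule istopology_openin)
next
  fix S assume "openin (topology ?open) S"
  then show "openin (topology_generated_by \<B>) S"
  proof (rule minimal_topology_subbase[rotated 2])
    show "openin (topology_generated_by \<B>) (\<Union> \<B>)"
      using openin_topspace[of "topology_generated_by \<B>"] by simp
  qed (auto intro: topology_generated_by_Basis)
qed

definition order_separated :: "'a topology \<Rightarrow> ('a \<Rightarrow> 'a \<Rightarrow> bool) \<Rightarrow> bool" where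
  "order_separated X le \<longleftrightarrow>
     (\<forall>x\<in>topspace X. \<forall>y\<in>topspace X. \<not> le x y \<longrightarrow>
        (\<exists>U V. openin X U \<and> openin X V \<and> x \<in> U \<and> y \<in> V \<and> (\<forall>x'\<in>U. \<forall>y'\<in>V. \<not> le x' y')))"

lemma order_separatedD:
  assumes "order_separated X le" "x \<in> topspace X" "y \<in> topspace X" "\<not> le x y"
  obtains U V where "openin X U" "openin X V" "x \<in> U" "y \<in> V" "\<forall>x'\<in>U. \<forall>y'\<in>V. \<not> le x' y'"
  using assms(1)[unfolded order_separated_def, rule_format, OF assms(2-4)] that by blast

lemma closedin_order_graph_if_order_separated:
  assumes "order_separated X le"
  shows "closedin (prod_topology X X) (order_graph X le)"
  unfolding closedin_def
proof
  show "order_graph X le \<subseteq> topspace (prod_topology X X)"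
    by (auto simp: order_graph_def)
  show "openin (prod_topology X X) (topspace (prod_topology X X) - order_graph X le)"
  proof (subst openin_subopen, intro ballI)
    fix p assume p: "p \<in> topspace (prod_topology X X) - order_graph X le"
    obtain x y where xy: "p = (x, y)"
      by (cases p)
    with p have "x \<in> topspace X" "y \<in> topspace X" "\<not> le x y"
      by (auto simp: order_graph_def)
    with assms obtain U V where UV: "openin X U" "openin X V" "x \<in> U" "y \<in> V"
      "\<forall>x'\<in>U. \<forall>y'\<in>V. \<not> le x' y'"
      by (rule order_separatedD)
    have "openin (prod_topology X X) (U \<times> V)"
      using UV by (simp add: openin_prod_Times_iff)
    moreover have "U \<times> V \<subseteq> topspace (prod_topology X X) - order_graph X le"
      using UV(5) openin_subset[OF UV(1)] openin_subset[OF UV(2)] by (auto simp: order_graph_def)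
    ultimately show "\<exists>T. openin (prod_topology X X) T \<and> p \<in> T \<and>
                 T \<subseteq> topspace (prod_topology X X) - order_graph X le"
      using xy UV(3,4) by blast
  qed
qed

lemma Hausdorff_space_if_order_separated:
  assumes sep: "order_separated X le" and po: "partial_order_on_set (topspace X) le"
  shows "Hausdorff_space X"
  unfolding Hausdorff_space_def
proof (intro allI impI)
  fix x y assume "x \<in> topspace X \<and> y \<in> topspace X \<and> x \<noteq> y"
  then have x: "x \<in> topspace X" and y: "y \<in> topspace X" and "\<not> le x y \<or> \<not> le y x"
    using po unfolding partial_order_on_set_def by auto
  have disjoint: "disjnt U V" if "openin X U" "\<forall>x'\<in>U. \<forall>y'\<in>V. \<not> le x' y'" for U V
  proof -
    have "le z z" if "z \<in> U" for z
      using po openin_subset[OF \<open>openin X U\<close>] that unfolding partial_order_on_set_def by blast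
    with that(2) show ?thesis
      unfolding disjnt_def by blast
  qed
  from \<open>\<not> le x y \<or> \<not> le y x\<close>
  show "\<exists>U V. openin X U \<and> openin X V \<and> x \<in> U \<and> y \<in> V \<and> disjnt U V"
  proof
    assume "\<not> le x y"
    with sep x y obtain U V where "openin X U" "openin X V" "x \<in> U" "y \<in> V"
      "\<forall>x'\<in>U. \<forall>y'\<in>V. \<not> le x' y'"
      by (rule order_separatedD)
    with disjoint show ?thesis
      by blast
  next
    assume "\<not> le y x"
    with sep y x obtain U V where "openin X U" "openin X V" "y \<in> U" "x \<in> V"
      "\<forall>x'\<in>U. \<forall>y'\<in>V. \<not> le x' y'"
      by (rule order_separatedD)
    with disjoint[of U V] show ?thesis
      by (blast intro: disjnt_sym)
  qed
qed

subsection \<open>Order duality\<close>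

lemma up_closure_conversep [simp]: "up_closure X le\<inverse>\<inverse> = down_closure X le"
  by (auto simp: up_closure_def down_closure_def)

lemma down_closure_conversep [simp]: "down_closure X le\<inverse>\<inverse> = up_closure X le"
  by (auto simp: up_closure_def down_closure_def)

lemma is_upset_conversep [simp]: "is_upset X le\<inverse>\<inverse> = is_downset X le"
  by (auto simp: is_upset_def is_downset_def)

lemma is_downset_conversep [simp]: "is_downset X le\<inverse>\<inverse> = is_upset X le"
  by (auto simp: is_upset_def is_downset_def)

lemma Vc_carrier_conversep [simp]: "Vc_carrier X le\<inverse>\<inverse> = Vc_carrier X le"
  by (auto simp: Vc_carrier_def order_convex_def)

lemma open_up_or_down_conversep [simp]: "open_up_or_down X le\<inverse>\<inverse> = open_up_or_down X le"
  by (auto simp: open_up_or_down_def)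

lemma Vc_topology_conversep [simp]: "Vc_topology X le\<inverse>\<inverse> = Vc_topology X le"
  by (simp add: Vc_topology_def Vc_diamond_def Vc_box_def)

lemma EM_le_conversep [simp]: "EM_le X le\<inverse>\<inverse> K L = EM_le X le L K"
  by (auto simp: EM_le_def)

lemma compact_ordered_space_conversep:
  assumes "compact_ordered_space X le"
  shows "compact_ordered_space X le\<inverse>\<inverse>"
proof -
  have "continuous_map (prod_topology X X) (prod_topology X X) (\<lambda>(x, y). (y, x))"
    using homeomorphic_map_swap homeomorphic_imp_continuous_map by blast
  moreover have "closedin (prod_topology X X) (order_graph X le)"
    using assms unfolding compact_ordered_space_def by blast
  ultimately have "closedin (prod_topology X X)
                     {p \<in> topspace (prod_topology X X). (\<lambda>(x, y). (y, x)) p \<in> order_graph X le}"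
    by (rule closedin_continuous_map_preimage)
  moreover have "order_graph X le\<inverse>\<inverse> =
          {p \<in> topspace (prod_topology X X). (\<lambda>(x, y). (y, x)) p \<in> order_graph X le}"
    by (auto simp: order_graph_def)
  moreover have "partial_order_on_set (topspace X) le\<inverse>\<inverse>"
    using assms unfolding compact_ordered_space_def partial_order_on_set_def by blast
  ultimately show ?thesis
    using assms unfolding compact_ordered_space_def by simp
qed

subsection \<open>Compact ordered spaces\<close>

lemma order_convex_diff_upset_downset:
  assumes "is_upset X le A" and "is_downset X le B"
  shows "order_convex X le (topspace X - A - B)"
  using assms unfolding order_convex_def is_upset_def is_downset_def up_closure_def down_closure_def
  by blast

lemma is_upset_complement: "is_downset X le D \<Longrightarrow> is_upset X le (topspace X - D)"
  unfolding is_upset_def is_downset_def up_closure_def down_closure_def by blast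

lemma is_upset_Union: "\<forall>U\<in>\<U>. is_upset X le U \<Longrightarrow> is_upset X le (\<Union>\<U>)"
  unfolding is_upset_def up_closure_def by blast

lemma is_downset_Union: "\<forall>U\<in>\<U>. is_downset X le U \<Longrightarrow> is_downset X le (\<Union>\<U>)"
  unfolding is_downset_def down_closure_def by blast

locale compact_ordered =
  fixes X :: "'a topology" and le :: "'a \<Rightarrow> 'a \<Rightarrow> bool"
  assumes compact_ordered: "compact_ordered_space X le"
begin

lemma compact: "compact_space X"
  and Hausdorff: "Hausdorff_space X"
  and partial_order: "partial_order_on_set (topspace X) le"
  and closedin_order_graph: "closedin (prod_topology X X) (order_graph X le)"
  using compact_ordered by (auto simp: compact_ordered_space_def)

lemma refl_le: "x \<in> topspace X \<Longrightarrow> le x x"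
  using partial_order unfolding partial_order_on_set_def by blast

lemma trans_le: "\<lbrakk>x \<in> topspace X; y \<in> topspace X; z \<in> topspace X; le x y; le y z\<rbrakk> \<Longrightarrow> le x z"
  using partial_order unfolding partial_order_on_set_def by blast

lemma dual: "compact_ordered X le\<inverse>\<inverse>"
  by (rule compact_ordered.intro[OF compact_ordered_space_conversep[OF compact_ordered]])

text \<open>The up-closure of C is the projection of the compact set of pairs (c, x) with c \<le> x.\<close>

lemma closedin_up_closure:
  assumes "closedin X C"
  shows "closedin X (up_closure X le C)"
proof -
  let ?G = "order_graph X le \<inter> (C \<times> topspace X)"
  have "up_closure X le C = snd ` ?G"
    using closedin_subset[OF assms] by (force simp: up_closure_def order_graph_def image_iff)
  moreover have "closedin (prod_topology X X) ?G"
    using closedin_order_graph assms by (intro closedin_Int) (auto simp: closedin_prod_Times_iff)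
  then have "compactin (prod_topology X X) ?G"
    using compact closedin_compact_space compact_space_prod_topology by blast
  then have "compactin X (snd ` ?G)"
    by (rule image_compactin[OF _ continuous_map_snd])
  ultimately show ?thesis
    by (simp add: compactin_imp_closedin[OF Hausdorff])
qed

lemma closedin_down_closure: "closedin X C \<Longrightarrow> closedin X (down_closure X le C)"
  using compact_ordered.closedin_up_closure[OF dual] by simp

lemma subset_up_closure: "S \<subseteq> topspace X \<Longrightarrow> S \<subseteq> up_closure X le S"
  using refl_le unfolding up_closure_def by blast

lemma subset_down_closure: "S \<subseteq> topspace X \<Longrightarrow> S \<subseteq> down_closure X le S"
  using refl_le unfolding down_closure_def by blast

lemma is_upset_up_closure:
  assumes "S \<subseteq> topspace X"
  shows "is_upset X le (up_closure X le S)"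
  unfolding is_upset_def
proof
  show "up_closure X le S \<subseteq> topspace X"
    by (auto simp: up_closure_def)
  show "up_closure X le (up_closure X le S) \<subseteq> up_closure X le S"
  proof
    fix z assume "z \<in> up_closure X le (up_closure X le S)"
    then obtain y s where "z \<in> topspace X" "y \<in> topspace X" "le y z" "s \<in> S" "le s y"
      unfolding up_closure_def by blast
    with assms trans_le[of s y z] show "z \<in> up_closure X le S"
      unfolding up_closure_def by blast
  qed
qed

lemma is_downset_down_closure: "S \<subseteq> topspace X \<Longrightarrow> is_downset X le (down_closure X le S)"
  using compact_ordered.is_upset_up_closure[OF dual] by simp

text \<open>The largest upset inside W is the complement of the down-closure of the complement of W.\<close>

lemma open_upset_between:
  assumes "closedin X F" "is_upset X le F" "openin X W" "F \<subseteq> W"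
  obtains U where "openin X U" "is_upset X le U" "F \<subseteq> U" "U \<subseteq> W"
proof -
  let ?U = "topspace X - down_closure X le (topspace X - W)"
  have "openin X ?U"
    using assms(3) by (intro openin_diff closedin_down_closure) auto
  moreover have "is_upset X le ?U"
    by (intro is_upset_complement is_downset_down_closure) blast
  moreover have "F \<subseteq> ?U"
    using assms(2,4) unfolding is_upset_def up_closure_def down_closure_def by blast
  moreover have "?U \<subseteq> W"
    using subset_down_closure[of "topspace X - W"] by blast
  ultimately show thesis
    by (rule that)
qed

lemma open_downset_between:
  assumes "closedin X F" "is_downset X le F" "openin X W" "F \<subseteq> W"
  obtains V where "openin X V" "is_downset X le V" "F \<subseteq> V" "V \<subseteq> W"
proof -
  interpret dual: compact_ordered X "le\<inverse>\<inverse>"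
    by (rule dual)
  have "is_upset X le\<inverse>\<inverse> F"
    using assms(2) by simp
  from dual.open_upset_between[OF assms(1) this assms(3,4)]
  obtain V where "openin X V" "is_upset X le\<inverse>\<inverse> V" "F \<subseteq> V" "V \<subseteq> W" .
  with that show thesis
    by simp
qed

lemma open_upset_downset_separation:
  assumes "closedin X C" "closedin X D" and not_le: "\<And>c d. c \<in> C \<Longrightarrow> d \<in> D \<Longrightarrow> \<not> le c d"
  obtains U V where "openin X U" "openin X V" "is_upset X le U" "is_downset X le V"
    "C \<subseteq> U" "D \<subseteq> V" "disjnt U V"
proof -
  have sub: "C \<subseteq> topspace X" "D \<subseteq> topspace X"
    using closedin_subset[OF assms(1)] closedin_subset[OF assms(2)] by auto
  have "disjnt (up_closure X le C) (down_closure X le D)"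
    unfolding disjnt_def
  proof (intro equals0I)
    fix z assume "z \<in> up_closure X le C \<inter> down_closure X le D"
    then obtain c d where "z \<in> topspace X" "c \<in> C" "d \<in> D" "le c z" "le z d"
      unfolding up_closure_def down_closure_def by blast
    with sub trans_le[of c z d] not_le show False
      by blast
  qed
  moreover have "normal_space X"
    using compact Hausdorff compact_Hausdorff_or_regular_imp_normal_space by blast
  ultimately obtain W1 W2 where W: "openin X W1" "openin X W2"
    "up_closure X le C \<subseteq> W1" "down_closure X le D \<subseteq> W2" "disjnt W1 W2"
    using closedin_up_closure[OF assms(1)] closedin_down_closure[OF assms(2)]
    unfolding normal_space_def by meson
  obtain U where U: "openin X U" "is_upset X le U" "up_closure X le C \<subseteq> U" "U \<subseteq> W1"
    by (rule open_upset_between[OF closedin_up_closure[OF assms(1)] is_upset_up_closure[OF sub(1)] W(1,3)])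
  obtain V where V: "openin X V" "is_downset X le V" "down_closure X le D \<subseteq> V" "V \<subseteq> W2"
    by (rule open_downset_between[OF closedin_down_closure[OF assms(2)] is_downset_down_closure[OF sub(2)] W(2,4)])
  have "C \<subseteq> U" "D \<subseteq> V"
    using subset_up_closure[OF sub(1)] subset_down_closure[OF sub(2)] U(3) V(3) by blast+
  moreover have "disjnt U V"
    using W(5) U(4) V(4) unfolding disjnt_def by blast
  ultimately show thesis
    using that U(1,2) V(1,2) by blast
qed

end

subsection \<open>The convex Vietoris hyperspace\<close>

definition Vc_subbasis :: "'a topology \<Rightarrow> ('a \<Rightarrow> 'a \<Rightarrow> bool) \<Rightarrow> 'a set set set" where
  "Vc_subbasis X le =
     {Vc_diamond X le U | U. open_up_or_down X le U} \<union> {Vc_box X le U | U. open_up_or_down X le U}"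

lemma Vc_topology_eq: "Vc_topology X le = topology_generated_by (Vc_subbasis X le)"
  by (simp add: Vc_topology_def Vc_subbasis_def)

lemma topspace_Vc_topology: "topspace (Vc_topology X le) = Vc_carrier X le"
proof -
  have "open_up_or_down X le (topspace X)"
    unfolding open_up_or_down_def is_upset_def up_closure_def by auto
  moreover have "Vc_box X le (topspace X) = Vc_carrier X le"
    unfolding Vc_box_def Vc_carrier_def using closedin_subset by blast
  ultimately have "Vc_carrier X le \<in> Vc_subbasis X le"
    unfolding Vc_subbasis_def by blast
  moreover have "\<Union>(Vc_subbasis X le) \<subseteq> Vc_carrier X le"
    unfolding Vc_subbasis_def Vc_diamond_def Vc_box_def by blast
  ultimately show ?thesis
    unfolding Vc_topology_eq topology_generated_by_topspace by blast
qed

lemma openin_Vc_diamond: "open_up_or_down X le U \<Longrightarrow> openin (Vc_topology X le) (Vc_diamond X le U)"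
  unfolding Vc_topology_eq by (rule topology_generated_by_Basis) (auto simp: Vc_subbasis_def)

lemma openin_Vc_box: "open_up_or_down X le U \<Longrightarrow> openin (Vc_topology X le) (Vc_box X le U)"
  unfolding Vc_topology_eq by (rule topology_generated_by_Basis) (auto simp: Vc_subbasis_def)

lemma Diff_Union_in_Vc_carrier:
  assumes "\<forall>U\<in>\<U>. open_up_or_down X le U"
  shows "topspace X - \<Union>\<U> \<in> Vc_carrier X le"
proof -
  let ?A = "\<Union>{U \<in> \<U>. is_upset X le U}" and ?B = "\<Union>{U \<in> \<U>. is_downset X le U}"
  have "is_upset X le ?A" "is_downset X le ?B"
    by (blast intro: is_upset_Union is_downset_Union)+
  moreover have "topspace X - ?A - ?B = topspace X - \<Union>\<U>"
    using assms unfolding open_up_or_down_def by blast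
  ultimately have "order_convex X le (topspace X - \<Union>\<U>)"
    using order_convex_diff_upset_downset by metis
  moreover have "closedin X (topspace X - \<Union>\<U>)"
    using assms unfolding open_up_or_down_def by blast
  ultimately show ?thesis
    unfolding Vc_carrier_def by blast
qed

lemma Vc_carrier_subset_box_Un_diamonds:
  assumes "topspace X - V \<subseteq> \<Union>\<F>"
  shows "Vc_carrier X le \<subseteq> Vc_box X le V \<union> \<Union>(Vc_diamond X le ` \<F>)"
proof
  fix L assume L: "L \<in> Vc_carrier X le"
  then have "L \<subseteq> topspace X"
    unfolding Vc_carrier_def using closedin_subset by blast
  with assms L show "L \<in> Vc_box X le V \<union> \<Union>(Vc_diamond X le ` \<F>)"
    unfolding Vc_box_def Vc_diamond_def by blast
qed

context compact_ordered
begin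

lemma Vc_carrier_eq_up_closure_Int_down_closure:
  assumes "K \<in> Vc_carrier X le"
  shows "K = up_closure X le K \<inter> down_closure X le K"
  using assms closedin_subset refl_le
  unfolding Vc_carrier_def order_convex_def up_closure_def down_closure_def by blast

lemma partial_order_EM_le: "partial_order_on_set (Vc_carrier X le) (EM_le X le)"
  unfolding partial_order_on_set_def
proof (intro conjI ballI impI)
  fix K L assume "K \<in> Vc_carrier X le" "L \<in> Vc_carrier X le" "EM_le X le K L \<and> EM_le X le L K"
  then show "K = L"
    using Vc_carrier_eq_up_closure_Int_down_closure unfolding EM_le_def by (metis subset_antisym)
qed (auto simp: EM_le_def)

lemma not_EM_le_separated_down:
  assumes K: "K \<in> Vc_carrier X le" and L: "L \<in> Vc_carrier X le"
    and not_sub: "\<not> down_closure X le K \<subseteq> down_closure X le L"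
  obtains N1 N2 where "openin (Vc_topology X le) N1" "openin (Vc_topology X le) N2"
    "K \<in> N1" "L \<in> N2" "\<forall>K'\<in>N1. \<forall>L'\<in>N2. \<not> EM_le X le K' L'"
proof -
  have sub: "K \<subseteq> topspace X" "L \<subseteq> topspace X" and "closedin X L"
    using K L closedin_subset unfolding Vc_carrier_def by auto
  obtain x k where xk: "x \<in> topspace X" "k \<in> K" "le x k" "x \<notin> down_closure X le L"
    using not_sub unfolding down_closure_def by blast
  have "\<not> le c l" if "c \<in> {k}" "l \<in> L" for c l
  proof
    assume "le c l"
    then have "le x l"
      using trans_le[of x k l] xk sub that by blast
    then show False
      using xk that unfolding down_closure_def by blast
  qed
  moreover have "closedin X {k}"
    using xk(2) sub(1) by (blast intro: closedin_Hausdorff_singleton Hausdorff)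
  ultimately obtain U V where UV: "openin X U" "openin X V" "is_upset X le U" "is_downset X le V"
      "{k} \<subseteq> U" "L \<subseteq> V" "disjnt U V"
    using open_upset_downset_separation \<open>closedin X L\<close> by metis
  have "openin (Vc_topology X le) (Vc_diamond X le U)" "openin (Vc_topology X le) (Vc_box X le V)"
    using UV(1-4) by (simp_all add: openin_Vc_diamond openin_Vc_box open_up_or_down_def)
  moreover have "K \<in> Vc_diamond X le U" "L \<in> Vc_box X le V"
    using K L xk(2) UV(5,6) unfolding Vc_diamond_def Vc_box_def by auto
  moreover have "\<not> EM_le X le K' L'"
    if K': "K' \<in> Vc_diamond X le U" and L': "L' \<in> Vc_box X le V" for K' L'
  proof
    assume "EM_le X le K' L'"
    obtain k' where "k' \<in> K'" "k' \<in> U"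
      using K' unfolding Vc_diamond_def by blast
    then have "k' \<in> down_closure X le K'"
      using UV(3) refl_le unfolding is_upset_def down_closure_def by blast
    with \<open>EM_le X le K' L'\<close> have "k' \<in> down_closure X le L'"
      unfolding EM_le_def by blast
    moreover have "down_closure X le L' \<subseteq> V"
      using L' UV(4) unfolding Vc_box_def is_downset_def down_closure_def by blast
    ultimately show False
      using \<open>k' \<in> U\<close> UV(7) unfolding disjnt_def by blast
  qed
  ultimately show thesis
    using that by blast
qed

lemma order_separated_EM_le: "order_separated (Vc_topology X le) (EM_le X le)"
  unfolding order_separated_def topspace_Vc_topology
proof (intro ballI impI)
  interpret dual: compact_ordered X "le\<inverse>\<inverse>"
    by (rule dual)
  fix K L assume K: "K \<in> Vc_carrier X le" and L: "L \<in> Vc_carrier X le" and "\<not> EM_le X le K L"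
  then consider "\<not> down_closure X le K \<subseteq> down_closure X le L"
    | "\<not> down_closure X le\<inverse>\<inverse> L \<subseteq> down_closure X le\<inverse>\<inverse> K"
    unfolding EM_le_def by auto
  then show "\<exists>N1 N2. openin (Vc_topology X le) N1 \<and> openin (Vc_topology X le) N2 \<and> K \<in> N1 \<and> L \<in> N2
               \<and> (\<forall>K'\<in>N1. \<forall>L'\<in>N2. \<not> EM_le X le K' L')"
  proof cases
    case 1
    obtain N1 N2 where "openin (Vc_topology X le) N1" "openin (Vc_topology X le) N2"
      "K \<in> N1" "L \<in> N2" "\<forall>K'\<in>N1. \<forall>L'\<in>N2. \<not> EM_le X le K' L'"
      by (rule not_EM_le_separated_down[OF K L 1])
    then show ?thesis
      by (intro exI[of _ N1] exI[of _ N2]) simp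
  next
    case 2
    from K L have "L \<in> Vc_carrier X le\<inverse>\<inverse>" "K \<in> Vc_carrier X le\<inverse>\<inverse>"
      by simp_all
    then obtain N1 N2 where "openin (Vc_topology X le\<inverse>\<inverse>) N1" "openin (Vc_topology X le\<inverse>\<inverse>) N2"
      "L \<in> N1" "K \<in> N2" "\<forall>L'\<in>N1. \<forall>K'\<in>N2. \<not> EM_le X le\<inverse>\<inverse> L' K'"
      by (rule dual.not_EM_le_separated_down[OF _ _ 2])
    then show ?thesis
      by (intro exI[of _ N2] exI[of _ N1]) simp
  qed
qed

lemma compact_space_Vc_topology: "compact_space (Vc_topology X le)"
proof (rule Alexander_subbase[where \<B> = "Vc_subbasis X le"])
  show "topology (arbitrary union_of (finite intersection_of (\<lambda>S. S \<in> Vc_subbasis X le)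
          relative_to \<Union> (Vc_subbasis X le))) = Vc_topology X le"
    by (simp add: Vc_topology_eq topology_generated_by_eq_subbase)
next
  fix \<C> assume \<C>: "\<C> \<subseteq> Vc_subbasis X le" and cover: "\<Union>\<C> = topspace (Vc_topology X le)"
  define \<U> where "\<U> = {U. open_up_or_down X le U \<and> Vc_diamond X le U \<in> \<C>}"
  have \<U>_open_up_or_down: "\<forall>U\<in>\<U>. open_up_or_down X le U"
    unfolding \<U>_def by blast
  then have open_\<U>: "openin X U" if "U \<in> \<U>" for U
    using that unfolding open_up_or_down_def by blast
  from Diff_Union_in_Vc_carrier[OF \<U>_open_up_or_down]
  have "topspace X - \<Union>\<U> \<in> \<Union>\<C>"
    unfolding cover topspace_Vc_topology .
  then obtain c where c: "c \<in> \<C>" "topspace X - \<Union>\<U> \<in> c"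
    by blast
  obtain V where V: "open_up_or_down X le V" "c = Vc_box X le V"
  proof -
    from c(1) \<C> consider (diamond) U where "open_up_or_down X le U" "c = Vc_diamond X le U"
      | (box) V where "open_up_or_down X le V" "c = Vc_box X le V"
      unfolding Vc_subbasis_def by blast
    then show thesis
    proof cases
      case diamond
      then have "U \<in> \<U>"
        using c(1) unfolding \<U>_def by simp
      moreover have "(topspace X - \<Union>\<U>) \<inter> U \<noteq> {}"
        using c(2) diamond(2) unfolding Vc_diamond_def by simp
      ultimately show thesis
        by blast
    qed (rule that)
  qed
  have "compactin X (topspace X - V)"
    using V(1) unfolding open_up_or_down_def
    by (intro closedin_compact_space[OF compact] closedin_diff) auto
  moreover have "topspace X - \<Union>\<U> \<subseteq> V"
    using c(2) V(2) unfolding Vc_box_def by simp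
  then have "topspace X - V \<subseteq> \<Union>\<U>"
    by blast
  ultimately obtain \<F> where \<F>: "finite \<F>" "\<F> \<subseteq> \<U>" "topspace X - V \<subseteq> \<Union>\<F>"
    using compactinD[of X "topspace X - V" \<U>] open_\<U> by blast
  let ?\<C>' = "insert c (Vc_diamond X le ` \<F>)"
  have sub: "?\<C>' \<subseteq> \<C>"
    using c(1) \<F>(2) unfolding \<U>_def by blast
  have "Vc_carrier X le \<subseteq> Vc_box X le V \<union> \<Union>(Vc_diamond X le ` \<F>)"
    using \<F>(3) by (rule Vc_carrier_subset_box_Un_diamonds)
  then have "topspace (Vc_topology X le) \<subseteq> \<Union>?\<C>'"
    by (simp add: topspace_Vc_topology V(2))
  moreover have "\<Union>?\<C>' \<subseteq> topspace (Vc_topology X le)"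
    using Union_mono[OF sub] cover by simp
  ultimately have "\<Union>?\<C>' = topspace (Vc_topology X le)"
    by (rule subset_antisym[rotated])
  with \<F>(1) sub show "\<exists>\<C>'. finite \<C>' \<and> \<C>' \<subseteq> \<C> \<and> \<Union>\<C>' = topspace (Vc_topology X le)"
    by (intro exI[of _ ?\<C>']) simp
qed

end

theorem theorem3p6:
  fixes X :: "'a topology" and le :: "'a \<Rightarrow> 'a \<Rightarrow> bool"
  assumes "compact_ordered_space X le"
  shows "topspace (Vc_topology X le) = Vc_carrier X le \<and>
         compact_ordered_space (Vc_topology X le) (EM_le X le)"
proof -
  interpret compact_ordered X le
    by (rule compact_ordered.intro) (fact assms)
  have order: "partial_order_on_set (topspace (Vc_topology X le)) (EM_le X le)"
    using partial_order_EM_le by (simp add: topspace_Vc_topology)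
  show ?thesis
    unfolding compact_ordered_space_def
    using topspace_Vc_topology compact_space_Vc_topology order
      Hausdorff_space_if_order_separated[OF order_separated_EM_le order]
      closedin_order_graph_if_order_separated[OF order_separated_EM_le]
    by blast
qed

end
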